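(* Let $f:\mathbb{R}^m\to\mathbb{R}\cup\{+\infty\}$ be a proper lower semicontinuous convex function such that $\mathrm{bdry}(S_f)\subseteq f^{-1}(0)$. Then the following are equivalent: (i) there exists $\tau\in(0,+\infty)$ such that $\inf\left\{\left|\min_{\|h\|=1}f'(\bar x,h)\right|:\bar x\in\mathrm{bdry}(S_f)\right\}>\tau$ and the following qualification condition (QC) holds: for any sequence $\{z_k\}\subseteq S_f\setminus\mathrm{bdry}(S_f)$ for which there is a sequence $\{x_k\}\subseteq\mathrm{bdry}(S_f)$ with $\lim_{k\to\infty}\frac{f(z_k)-f(x_k)}{\|z_k-x_k\|}=0$, one has $\liminf_{k\to\infty}\left|\min_{\|h\|=1}f'(z_k,h)\right|>\tau$; (ii) there exist constants $c,\varepsilon\in(0,+\infty)$ such that for every proper lsc convex $g:\mathbb{R}^m\to\mathbb{R}\cup\{+\infty\}$ satisfying $\mathrm{bdry}(S_f)\cap g^{-1}(0)\neq\emptyset$ and $\mathrm{Lip}(f-g)<\varepsilon$, one has $\tau_{\min}(g)\le c$; (iii) there exist constants $c,\varepsilon>0$ such that for every $\bar x\in\mathrm{bdry}(S_f)$ and every $u\in\mathbb{R}^m$ with $\|u\|\le1$, one has $\tau_{\min}(g_{u,\varepsilon})\le c$, where $g_{u,\varepsilon}(x):=f(x)+\varepsilon\langle u,x-\bar x\rangle$ for all $x\in\mathbb{R}^m$.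
   Context: $\mathbb{R}^m$ carries the Euclidean norm, $d(x,D)=\inf\{\|x-y\|:y\in D\}$, $\mathrm{bdry}(D)$ is the boundary of $D$. $f'(\bar x,h):=\lim_{t\to0^+}\frac{f(\bar x+th)-f(\bar x)}{t}$ is the directional derivative. For a proper lsc convex $g$, $S_g:=\{x: g(x)\le0\}$ and the global error bound modulus is $\tau_{\min}(g):=\inf\{\tau>0: d(x,S_g)\le\tau[g(x)]_+\ \forall x\in\mathbb{R}^m\}$, where $[t]_+=\max\{t,0\}$ and $\inf\emptyset=+\infty$. For a map $\phi$, $\mathrm{Lip}(\phi):=\sup_{u\neq v}\frac{|\phi(u)-\phi(v)|}{\|u-v\|}$. *)

theory Defs
  imports "HOL-Analysis.Analysis" "HOL-Library.Extended_Real" "HOL-Library.Liminf_Limsup"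
begin

definition proper_fn :: "('a \<Rightarrow> ereal) \<Rightarrow> bool" where
  "proper_fn f \<longleftrightarrow> (\<exists>x. f x \<noteq> \<infinity>) \<and> (\<forall>x. f x \<noteq> -\<infinity>)"

definition lsc_fn :: "('a::topological_space \<Rightarrow> ereal) \<Rightarrow> bool" where
  "lsc_fn f \<longleftrightarrow> (\<forall>x. \<forall>a. a < f x \<longrightarrow> eventually (\<lambda>y. a < f y) (at x))"

definition convex_fn :: "('a::real_vector \<Rightarrow> ereal) \<Rightarrow> bool" where
  "convex_fn f \<longleftrightarrow> (\<forall>x y. \<forall>t\<in>{0<..<1::real}.
      f ((1 - t) *\<^sub>R x + t *\<^sub>R y) \<le> ereal (1 - t) * f x + ereal t * f y)"

definition sublevel0 :: "('a \<Rightarrow> ereal) \<Rightarrow> 'a set" where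
  "sublevel0 f = {x. f x \<le> 0}"

definition dirderiv :: "('a::real_normed_vector \<Rightarrow> ereal) \<Rightarrow> 'a \<Rightarrow> 'a \<Rightarrow> ereal" where
  "dirderiv f x h = Lim (at_right (0::real)) (\<lambda>t. (f (x + t *\<^sub>R h) - f x) / ereal t)"

text \<open>\<open>min_{\<parallel>h\<parallel>=1} f'(x,h)\<close>, rendered as an infimum over the unit sphere.\<close>
definition min_dirderiv :: "('a::real_normed_vector \<Rightarrow> ereal) \<Rightarrow> 'a \<Rightarrow> ereal" where
  "min_dirderiv f x = (INF h\<in>sphere 0 1. dirderiv f x h)"

text \<open>Global error bound modulus; \<open>Inf {} = \<infinity>\<close>.\<close>
definition tau_min :: "('a::euclidean_space \<Rightarrow> ereal) \<Rightarrow> ereal" where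
  "tau_min g = (INF \<tau>\<in>{\<tau>::real. \<tau> > 0 \<and>
      (\<forall>x. ereal (infdist x (sublevel0 g)) \<le> ereal \<tau> * max 0 (g x))}. ereal \<tau>)"

definition Lip :: "('a::real_normed_vector \<Rightarrow> real) \<Rightarrow> ereal" where
  "Lip \<phi> = (SUP p\<in>{(u, v). u \<noteq> v}. ereal (\<bar>\<phi> (fst p) - \<phi> (snd p)\<bar> / norm (fst p - snd p)))"

end

theory Submission
  imports Defs
begin

text \<open>
  Two links between the error bound modulus of a proper lsc convex \<open>g\<close> and its steepest slope at
  the points where \<open>g\<close> is positive carry the proof: if every such point has a unit direction of
  slope below \<open>-\<sigma>\<close>, then \<open>tau_min g \<le> 1 / \<sigma>\<close>; if \<open>tau_min g \<le> c\<close>, then the direction towards the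
  nearest point of \<open>sublevel0 g\<close> has slope at most \<open>-1 / (2 c)\<close>. Replacing \<open>g\<close> by \<open>g + \<phi>\<close> moves
  slopes by at most the Lipschitz constant of \<open>\<phi>\<close>.

  (i) \<open>\<Longrightarrow>\<close> (ii): a point outside \<open>sublevel0 f\<close> projects onto the boundary, where the slope
  exceeds \<open>\<tau>\<close> in absolute value, and this forces slope \<open>-\<tau>\<close> at the point itself; inside, (QC)
  gives the same near the boundary. A perturbation with Lipschitz constant \<open>\<tau> / 2\<close> keeps slope
  \<open>-\<tau> / 4\<close> wherever the perturbed function is positive.
  (ii) \<open>\<Longrightarrow>\<close> (iii) is the special case of linear perturbations.
  (iii) \<open>\<Longrightarrow>\<close> (i): tilting \<open>f\<close> at a boundary point \<open>xbar\<close> of slope less than \<open>\<kappa>\<close> in absolute value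
  along a flat direction \<open>h\<close> gives a function of size \<open>O(\<kappa> t)\<close> at \<open>xbar + t h\<close> whose sublevel set
  stays at distance \<open>t / 3\<close>, against the error bound; tilting towards an interior point close to
  the boundary makes it a point of positive value, where the error bound yields a steep slope.
\<close>

section \<open>Directional derivatives of convex functions\<close>

definition diff_quot :: "('a::real_normed_vector \<Rightarrow> ereal) \<Rightarrow> 'a \<Rightarrow> 'a \<Rightarrow> real \<Rightarrow> ereal" where
  "diff_quot f x h t = (f (x + t *\<^sub>R h) - f x) / ereal t"

lemma diff_quot_ereal:
  assumes "f x = ereal a" "f (x + t *\<^sub>R h) = ereal b" "t \<noteq> 0"
  shows "diff_quot f x h t = ereal ((b - a) / t)"
  using assms by (simp add: diff_quot_def divide_ereal_def divide_inverse)

lemma diff_quot_mono: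
  fixes f :: "'a::real_normed_vector \<Rightarrow> ereal"
  assumes pr: "proper_fn f" and cv: "convex_fn f" and fx: "f x = ereal a"
    and st: "0 < s" "s < t"
  shows "diff_quot f x h s \<le> diff_quot f x h t"
proof (cases "f (x + t *\<^sub>R h)")
  case PInf
  then show ?thesis using st by (simp add: diff_quot_def fx divide_ereal_def)
next
  case MInf
  then show ?thesis using pr unfolding proper_fn_def by auto
next
  case (real b)
  define l where "l = s / t"
  have l: "l \<in> {0<..<1}" using st by (auto simp: l_def)
  have pt: "(1 - l) *\<^sub>R x + l *\<^sub>R (x + t *\<^sub>R h) = x + s *\<^sub>R h"
    using st by (simp add: l_def algebra_simps)
  have "f (x + s *\<^sub>R h) \<le> ereal (1 - l) * f x + ereal l * f (x + t *\<^sub>R h)"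
    using cv l unfolding convex_fn_def by (metis pt)
  also have "\<dots> = ereal ((1 - l) * a + l * b)" by (simp add: fx real)
  finally have le: "f (x + s *\<^sub>R h) \<le> ereal ((1 - l) * a + l * b)" .
  then obtain c where c: "f (x + s *\<^sub>R h) = ereal c" "c \<le> (1 - l) * a + l * b"
    using pr unfolding proper_fn_def by (cases "f (x + s *\<^sub>R h)") auto
  have "c - a \<le> l * (b - a)" using c(2) by (simp add: algebra_simps)
  then have "(c - a) / s \<le> l * (b - a) / s" using st by (simp add: divide_right_mono)
  also have "\<dots> = (b - a) / t" using st by (simp add: l_def field_simps)
  finally have "(c - a) / s \<le> (b - a) / t" .
  then show ?thesis using st by (simp add: diff_quot_ereal fx real c)
qed

lemma dirderiv_eq_INF_diff_quot:
  fixes f :: "'a::real_normed_vector \<Rightarrow> ereal"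
  assumes pr: "proper_fn f" and cv: "convex_fn f" and fx: "f x = ereal a"
  shows "dirderiv f x h = (INF t\<in>{0<..}. diff_quot f x h t)"
proof -
  let ?I = "INF t\<in>{0<..}. diff_quot f x h t"
  have "(diff_quot f x h \<longlongrightarrow> ?I) (at_right 0)"
  proof (rule order_tendstoI)
    fix b assume "b < ?I"
    then have "\<forall>t>0. b < diff_quot f x h t"
      by (metis greaterThan_iff INF_lower order_less_le_trans)
    then show "eventually (\<lambda>t. b < diff_quot f x h t) (at_right 0)"
      unfolding eventually_at_right_field by (metis zero_less_one)
  next
    fix b assume "?I < b"
    then obtain t0 where t0: "t0 > 0" "diff_quot f x h t0 < b"
      unfolding INF_less_iff by auto
    have "\<forall>t>0. t < t0 \<longrightarrow> diff_quot f x h t < b"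
      using diff_quot_mono[OF pr cv fx, of _ t0 h] t0 by (meson order_le_less_trans)
    then show "eventually (\<lambda>t. diff_quot f x h t < b) (at_right 0)"
      unfolding eventually_at_right_field using t0 by blast
  qed
  moreover have "dirderiv f x h = Lim (at_right 0) (diff_quot f x h)"
    by (simp add: dirderiv_def diff_quot_def[abs_def])
  ultimately show ?thesis by (simp add: tendsto_Lim)
qed

lemma dirderiv_le_secant:
  fixes f :: "'a::real_normed_vector \<Rightarrow> ereal"
  assumes "proper_fn f" "convex_fn f" "f x = ereal a" "0 < t" "f (x + t *\<^sub>R h) = ereal b"
  shows "dirderiv f x h \<le> ereal ((b - a) / t)"
proof -
  have "dirderiv f x h \<le> diff_quot f x h t"
    using assms by (simp add: dirderiv_eq_INF_diff_quot INF_lower)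
  also have "\<dots> = ereal ((b - a) / t)"
    using assms by (simp add: diff_quot_ereal)
  finally show ?thesis .
qed

lemma dirderiv_toward_le_secant:
  fixes f :: "'a::real_normed_vector \<Rightarrow> ereal"
  assumes "proper_fn f" "convex_fn f" "f y = ereal a" "f p = ereal b" "p \<noteq> y"
  shows "\<exists>h\<in>sphere 0 1. dirderiv f y h \<le> ereal ((b - a) / dist y p)"
proof -
  define r where "r = dist y p"
  define h where "h = (1 / r) *\<^sub>R (p - y)"
  have "0 < r" and h: "h \<in> sphere 0 1" and "y + r *\<^sub>R h = p"
    using \<open>p \<noteq> y\<close> by (auto simp: h_def r_def dist_norm norm_minus_commute)
  then have "dirderiv f y h \<le> ereal ((b - a) / r)"
    using assms by (intro dirderiv_le_secant) auto
  then show ?thesis using h by (auto simp: r_def)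
qed

lemma ray_ge_if_dirderiv_ge:
  fixes f :: "'a::real_normed_vector \<Rightarrow> ereal"
  assumes pr: "proper_fn f" and cv: "convex_fn f" and fx: "f x = ereal a"
    and ge: "ereal \<sigma> \<le> dirderiv f x h" and t: "0 < t"
  shows "ereal (a + \<sigma> * t) \<le> f (x + t *\<^sub>R h)"
proof (cases "f (x + t *\<^sub>R h)")
  case (real b)
  have "ereal \<sigma> \<le> ereal ((b - a) / t)"
    using ge dirderiv_le_secant[OF pr cv fx t real] by (rule order_trans)
  then show ?thesis using real t by (simp add: field_simps)
next
  case MInf
  then show ?thesis using pr unfolding proper_fn_def by auto
qed simp

lemma eventually_ray_less_if_dirderiv_less:
  fixes f :: "'a::real_normed_vector \<Rightarrow> ereal"
  assumes pr: "proper_fn f" and cv: "convex_fn f" and fx: "f x = ereal a"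
    and less: "dirderiv f x h < ereal \<sigma>"
  shows "eventually (\<lambda>t. f (x + t *\<^sub>R h) < ereal (a + \<sigma> * t)) (at_right 0)"
proof -
  obtain t0 where t0: "0 < t0" "diff_quot f x h t0 < ereal \<sigma>"
    using less by (auto simp: dirderiv_eq_INF_diff_quot[OF pr cv fx] INF_less_iff)
  have "f (x + t *\<^sub>R h) < ereal (a + \<sigma> * t)" if t: "0 < t" "t < t0" for t
  proof -
    have dq: "diff_quot f x h t < ereal \<sigma>"
      using diff_quot_mono[OF pr cv fx t] t0(2) by (rule le_less_trans)
    show ?thesis
    proof (cases "f (x + t *\<^sub>R h)")
      case (real b)
      then show ?thesis using dq t by (simp add: diff_quot_ereal fx field_simps)
    next
      case PInf
      then show ?thesis using dq t by (simp add: diff_quot_def fx divide_ereal_def)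
    next
      case MInf
      then show ?thesis using pr unfolding proper_fn_def by auto
    qed
  qed
  then show ?thesis
    unfolding eventually_at_right_field using t0(1) by blast
qed

lemma min_dirderiv_le: "h \<in> sphere 0 1 \<Longrightarrow> min_dirderiv f x \<le> dirderiv f x h"
  unfolding min_dirderiv_def by (rule INF_lower)

lemma min_dirderiv_lessD: "min_dirderiv f x < b \<Longrightarrow> \<exists>h\<in>sphere 0 1. dirderiv f x h < b"
  unfolding min_dirderiv_def by (simp add: INF_less_iff)

lemma growth_if_min_dirderiv_ge:
  fixes f :: "'a::real_normed_vector \<Rightarrow> ereal"
  assumes pr: "proper_fn f" and cv: "convex_fn f" and fy: "f y = ereal a"
    and ge: "ereal \<sigma> \<le> min_dirderiv f y"
  shows "ereal (a + \<sigma> * norm (z - y)) \<le> f z"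
proof (cases "z = y")
  case False
  define n where "n = norm (z - y)"
  define h where "h = (1 / n) *\<^sub>R (z - y)"
  have n: "0 < n" and h: "h \<in> sphere 0 1" and z: "y + n *\<^sub>R h = z"
    using False by (auto simp: n_def h_def)
  have "ereal \<sigma> \<le> dirderiv f y h"
    using ge min_dirderiv_le[OF h] by (rule order_trans)
  then have "ereal (a + \<sigma> * n) \<le> f (y + n *\<^sub>R h)"
    using ray_ge_if_dirderiv_ge[OF pr cv fy _ n] by blast
  then show ?thesis by (simp add: z flip: n_def)
qed (simp add: fy)

lemma eventually_at_right_0E:
  assumes "eventually P (at_right (0::real))" "0 < r"
  obtains t where "0 < t" "t < r" "P t"
proof -
  have "eventually (\<lambda>t. t < r) (at_right (0::real))"
    using \<open>0 < r\<close> unfolding eventually_at_right_field by blast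
  with assms(1) eventually_at_right_less[of 0]
  have "eventually (\<lambda>t. 0 < t \<and> t < r \<and> P t) (at_right (0::real))"
    by eventually_elim blast
  then show ?thesis using eventually_happens'[OF trivial_limit_at_right_real] that by blast
qed

section \<open>Sublevel sets and perturbations\<close>

lemma lsc_closed_sublevel:
  fixes g :: "'a::metric_space \<Rightarrow> ereal"
  assumes "lsc_fn g"
  shows "closed {x. g x \<le> a}"
proof -
  have "open {x. a < g x}"
    unfolding open_dist
  proof safe
    fix x assume "a < g x"
    then have "eventually (\<lambda>y. a < g y) (at x)" using assms unfolding lsc_fn_def by blast
    then obtain d where d: "d > 0" "\<And>y. y \<noteq> x \<Longrightarrow> dist y x < d \<Longrightarrow> a < g y"
      unfolding eventually_at by blast
    show "\<exists>e>0. \<forall>y. dist y x < e \<longrightarrow> y \<in> {x. a < g x}"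
      using d \<open>a < g x\<close> by (metis mem_Collect_eq)
  qed
  then show ?thesis
    by (simp add: closed_def Collect_neg_eq[symmetric] not_le)
qed

lemma closed_sublevel0: "lsc_fn (g::'a::metric_space \<Rightarrow> ereal) \<Longrightarrow> closed (sublevel0 g)"
  unfolding sublevel0_def by (rule lsc_closed_sublevel)

lemma convex_sublevel0:
  assumes "convex_fn g"
  shows "convex (sublevel0 g)"
  unfolding convex_alt sublevel0_def
proof safe
  fix x y :: 'a and u :: real
  assume x: "g x \<le> 0" and y: "g y \<le> 0" and u: "0 \<le> u" "u \<le> 1"
  show "g ((1 - u) *\<^sub>R x + u *\<^sub>R y) \<le> 0"
  proof (cases "u = 0 \<or> u = 1")
    case True then show ?thesis using x y by auto
  next
    case False
    then have "u \<in> {0<..<1}" using u by auto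
    then have "g ((1 - u) *\<^sub>R x + u *\<^sub>R y) \<le> ereal (1 - u) * g x + ereal u * g y"
      using assms unfolding convex_fn_def by blast
    also have "\<dots> \<le> 0"
    proof -
      have "ereal (1 - u) * g x \<le> 0" "ereal u * g y \<le> 0"
        using x y u by (simp_all add: ereal_mult_le_0_iff)
      then show ?thesis by (metis add_mono add.right_neutral)
    qed
    finally show ?thesis .
  qed
qed

lemma lsc_attains_inf:
  fixes g :: "'a::metric_space \<Rightarrow> ereal"
  assumes ls: "lsc_fn g" and K: "compact K" "K \<noteq> {}"
  shows "\<exists>y\<in>K. \<forall>z\<in>K. g y \<le> g z"
proof -
  define m where "m = (INF z\<in>K. g z)"
  define F where "F = (\<lambda>a. {x. g x \<le> a}) ` {a. m < a}"
  have cl: "\<And>T. T\<in>F \<Longrightarrow> closed T" unfolding F_def using lsc_closed_sublevel[OF ls] by auto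
  have fip: "K \<inter> \<Inter>F' \<noteq> {}" if fin: "finite F'" and sub: "F' \<subseteq> F" for F'
  proof -
    obtain A where A: "A \<subseteq> {a. m < a}" "finite A" "F' = (\<lambda>a. {x. g x \<le> a}) ` A"
      using finite_subset_image[OF fin sub[unfolded F_def]] by blast
    show ?thesis
    proof (cases "A = {}")
      case True then show ?thesis using A K by auto
    next
      case False
      have "m < Min A" using A False by auto
      then obtain z where z: "z \<in> K" "g z < Min A" unfolding m_def INF_less_iff by auto
      then have "z \<in> K \<inter> \<Inter>F'" using A False by auto
      then show ?thesis by auto
    qed
  qed
  have "K \<inter> \<Inter>F \<noteq> {}"
    by (rule compact_imp_fip[OF K(1)]) (use cl fip in auto)
  then obtain y where y: "y \<in> K" "y \<in> \<Inter>F" by auto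
  have "g y \<le> m"
  proof (rule ccontr)
    assume "\<not> g y \<le> m"
    then have "m < g y" by simp
    then obtain a where "m < a" "a < g y" using dense by blast
    then show False using y(2) unfolding F_def by auto
  qed
  then show ?thesis using y(1) unfolding m_def by (meson INF_lower order_trans)
qed

lemma proper_fn_add_real:
  assumes "proper_fn f"
  shows "proper_fn (\<lambda>x. f x + ereal (\<psi> x))"
  using assms unfolding proper_fn_def by auto

lemma lsc_fn_add_continuous:
  fixes f :: "'a::metric_space \<Rightarrow> ereal"
  assumes pr: "proper_fn f" and ls: "lsc_fn f" and ct: "continuous_on UNIV \<psi>"
  shows "lsc_fn (\<lambda>x. f x + ereal (\<psi> x))"
  unfolding lsc_fn_def
proof (intro allI impI)
  fix x a assume a: "a < f x + ereal (\<psi> x)"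
  show "eventually (\<lambda>y. a < f y + ereal (\<psi> y)) (at x)"
  proof (cases a)
    case MInf
    then show ?thesis using pr unfolding proper_fn_def by auto
  next
    case PInf then show ?thesis using a by simp
  next
    case (real r)
    then have "ereal (r - \<psi> x) < f x" using a by (cases "f x") auto
    then obtain d where d: "d > 0" "ereal (r - \<psi> x + d) < f x"
    proof (cases "f x")
      case (real b)
      then show ?thesis using \<open>ereal (r - \<psi> x) < f x\<close>
        by (intro that[of "(b - (r - \<psi> x)) / 2"]) (auto simp: field_simps)
    qed (use that[of 1] in auto)
    have "eventually (\<lambda>y. ereal (r - \<psi> x + d) < f y) (at x)"
      using ls d unfolding lsc_fn_def by blast
    moreover have "eventually (\<lambda>y. dist (\<psi> y) (\<psi> x) < d) (at x)"
      using ct d(1) by (intro tendstoD) (simp add: continuous_on_def)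
    ultimately show ?thesis
    proof eventually_elim
      case (elim y)
      then have "\<psi> x - d < \<psi> y" by (simp add: dist_real_def abs_less_iff)
      with elim show ?case using \<open>a = ereal r\<close> by (cases "f y") auto
    qed
  qed
qed

lemma convex_fn_add_affine:
  fixes f :: "'a::real_vector \<Rightarrow> ereal"
  assumes pr: "proper_fn f" and cv: "convex_fn f"
    and aff: "\<And>x y t. \<psi> ((1 - t) *\<^sub>R x + t *\<^sub>R y) = (1 - t) * \<psi> x + t * \<psi> y"
  shows "convex_fn (\<lambda>x. f x + ereal (\<psi> x))"
  unfolding convex_fn_def
proof (intro allI ballI)
  fix x y :: 'a and t :: real assume t: "t \<in> {0<..<1}"
  let ?z = "(1 - t) *\<^sub>R x + t *\<^sub>R y"
  have fz: "f ?z \<le> ereal (1 - t) * f x + ereal t * f y" using cv t unfolding convex_fn_def by blast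
  have "f ?z + ereal (\<psi> ?z) \<le> ereal (1 - t) * f x + ereal t * f y + ereal ((1 - t) * \<psi> x + t * \<psi> y)"
    using fz aff by (simp add: add_right_mono)
  also have "\<dots> = ereal (1 - t) * (f x + ereal (\<psi> x)) + ereal t * (f y + ereal (\<psi> y))"
    using t pr unfolding proper_fn_def by (cases "f x"; cases "f y") (auto simp: algebra_simps)
  finally show "f ?z + ereal (\<psi> ?z) \<le> ereal (1 - t) * (f x + ereal (\<psi> x)) + ereal t * (f y + ereal (\<psi> y))" .
qed

lemma
  fixes f :: "'a::real_inner \<Rightarrow> ereal"
  assumes pr: "proper_fn f" and ls: "lsc_fn f" and cv: "convex_fn f"
  shows proper_fn_tilt: "proper_fn (\<lambda>x. f x + ereal (e * (u \<bullet> (x - x0))))"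
    and lsc_fn_tilt: "lsc_fn (\<lambda>x. f x + ereal (e * (u \<bullet> (x - x0))))"
    and convex_fn_tilt: "convex_fn (\<lambda>x. f x + ereal (e * (u \<bullet> (x - x0))))"
proof -
  show "proper_fn (\<lambda>x. f x + ereal (e * (u \<bullet> (x - x0))))" by (rule proper_fn_add_real[OF pr])
  show "lsc_fn (\<lambda>x. f x + ereal (e * (u \<bullet> (x - x0))))"
    by (rule lsc_fn_add_continuous[OF pr ls]) (intro continuous_intros)
  show "convex_fn (\<lambda>x. f x + ereal (e * (u \<bullet> (x - x0))))"
    by (rule convex_fn_add_affine[OF pr cv]) (simp add: algebra_simps)
qed

lemma lipschitz_on_tilt: "(\<bar>e\<bar> * norm u)-lipschitz_on X (\<lambda>x. e * (u \<bullet> (x - x0)))"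
proof (rule lipschitz_onI)
  fix x y
  have "\<bar>e * (u \<bullet> (x - x0)) - e * (u \<bullet> (y - x0))\<bar> = \<bar>e\<bar> * \<bar>u \<bullet> (x - y)\<bar>"
    by (simp add: abs_mult inner_diff_right flip: right_diff_distrib)
  also have "\<dots> \<le> \<bar>e\<bar> * norm u * norm (x - y)"
    using Cauchy_Schwarz_ineq2[of u "x - y"] by (simp add: mult_left_mono mult.assoc)
  finally show "dist (e * (u \<bullet> (x - x0))) (e * (u \<bullet> (y - x0))) \<le> \<bar>e\<bar> * norm u * dist x y"
    by (simp add: dist_real_def dist_norm)
qed simp

lemma Lip_le_iff_lipschitz_on:
  assumes "0 \<le> L"
  shows "Lip \<phi> \<le> ereal L \<longleftrightarrow> L-lipschitz_on UNIV \<phi>"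
proof
  assume Lip: "Lip \<phi> \<le> ereal L"
  show "L-lipschitz_on UNIV \<phi>"
  proof (rule lipschitz_onI)
    fix u v
    show "dist (\<phi> u) (\<phi> v) \<le> L * dist u v"
    proof (cases "u = v")
      case False
      have "ereal (\<bar>\<phi> u - \<phi> v\<bar> / norm (u - v)) \<le> Lip \<phi>"
        unfolding Lip_def by (rule SUP_upper2[of "(u, v)"]) (use False in auto)
      then have "ereal (\<bar>\<phi> u - \<phi> v\<bar> / norm (u - v)) \<le> ereal L" using Lip by (rule order_trans)
      then have "\<bar>\<phi> u - \<phi> v\<bar> / norm (u - v) \<le> L" by simp
      then show ?thesis using False by (simp add: dist_real_def dist_norm field_simps)
    qed simp
  qed (rule assms)
next
  assume "L-lipschitz_on UNIV \<phi>"
  then show "Lip \<phi> \<le> ereal L"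
    unfolding Lip_def
  proof (intro SUP_least)
    fix p :: "'a \<times> 'a" assume "p \<in> {(u, v). u \<noteq> v}"
    then have "0 < norm (fst p - snd p)" by auto
    moreover have "\<bar>\<phi> (fst p) - \<phi> (snd p)\<bar> \<le> L * norm (fst p - snd p)"
      using lipschitz_on_normD[OF \<open>L-lipschitz_on UNIV \<phi>\<close>] by simp
    ultimately show "ereal (\<bar>\<phi> (fst p) - \<phi> (snd p)\<bar> / norm (fst p - snd p)) \<le> ereal L"
      by (simp add: divide_le_eq)
  qed
qed

section \<open>Error bounds and steepest descent\<close>

lemma tau_min_le:
  assumes pr: "proper_fn g" and "0 < \<tau>"
    and bound: "\<And>x a. g x = ereal a \<Longrightarrow> 0 < a \<Longrightarrow> infdist x (sublevel0 g) \<le> \<tau> * a"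
  shows "tau_min g \<le> ereal \<tau>"
proof -
  have "ereal (infdist x (sublevel0 g)) \<le> ereal \<tau> * max 0 (g x)" for x
  proof (cases "g x")
    case (real a)
    show ?thesis
    proof (cases "0 < a")
      case True then show ?thesis using bound[OF real] real by (simp add: max_def)
    next
      case False
      then have "x \<in> sublevel0 g" using real by (simp add: sublevel0_def)
      then show ?thesis using False real by (simp add: max_def)
    qed
  next
    case PInf then show ?thesis using \<open>0 < \<tau>\<close> by (simp add: max_def)
  next
    case MInf then show ?thesis using pr by (simp add: proper_fn_def)
  qed
  then show ?thesis unfolding tau_min_def by (intro INF_lower2[of \<tau>]) (use \<open>0 < \<tau>\<close> in auto)
qed

lemma infdist_le_if_tau_min_less:
  assumes "tau_min g < ereal T" and gx: "g x = ereal a"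
  shows "infdist x (sublevel0 g) \<le> T * max 0 a"
proof -
  obtain \<tau> where \<tau>: "0 < \<tau>" "\<tau> < T" and eb: "\<forall>x. ereal (infdist x (sublevel0 g)) \<le> ereal \<tau> * max 0 (g x)"
    using assms(1) unfolding tau_min_def INF_less_iff by auto
  have "ereal (infdist x (sublevel0 g)) \<le> ereal (\<tau> * max 0 a)"
    using eb[rule_format, of x] gx by (cases "0 \<le> a") (simp_all add: max_def)
  then have "infdist x (sublevel0 g) \<le> \<tau> * max 0 a" by simp
  also have "\<dots> \<le> T * max 0 a" using \<tau> by (intro mult_right_mono) auto
  finally show ?thesis .
qed

lemma dirderiv_ge_at_penalized_min:
  fixes g :: "'a::real_normed_vector \<Rightarrow> ereal"
  assumes pr: "proper_fn g" and cv: "convex_fn g" and gy: "g y = ereal b"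
    and "0 \<le> s" "0 < r" and h: "norm h = 1"
    and min: "\<And>z. z \<in> ball y r \<Longrightarrow> g y + ereal (s * dist y x) \<le> g z + ereal (s * dist z x)"
  shows "ereal (- s) \<le> dirderiv g y h"
proof (rule ccontr)
  assume "\<not> ?thesis"
  then have "\<forall>\<^sub>F t in at_right 0. g (y + t *\<^sub>R h) < ereal (b + (- s) * t)"
    by (intro eventually_ray_less_if_dirderiv_less[OF pr cv gy]) simp
  then obtain t where t: "0 < t" "t < r" and less: "g (y + t *\<^sub>R h) < ereal (b - s * t)"
    using \<open>0 < r\<close> by (rule eventually_at_right_0E) simp
  have "dist (y + t *\<^sub>R h) x \<le> dist y x + t"
    using dist_triangle[of "y + t *\<^sub>R h" x y] t h by (simp add: dist_norm)
  then have "s * dist (y + t *\<^sub>R h) x \<le> s * dist y x + s * t"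
    using \<open>0 \<le> s\<close> by (metis distrib_left mult_left_mono)
  then have "g (y + t *\<^sub>R h) + ereal (s * dist (y + t *\<^sub>R h) x) < g y + ereal (s * dist y x)"
    using less gy pr unfolding proper_fn_def by (cases "g (y + t *\<^sub>R h)") auto
  moreover have "y + t *\<^sub>R h \<in> ball y r" using t h by (simp add: dist_norm)
  ultimately show False using min by (simp add: not_le[symmetric])
qed

text \<open>An Ekeland-type argument: a minimiser of \<open>g + s * dist(-, x)\<close> over a ball around \<open>x\<close> that
  misses \<open>sublevel0 g\<close> lies inside the ball and would admit a direction of slope below \<open>-s\<close>.\<close>

lemma infdist_le_if_descent:
  fixes g :: "'a::euclidean_space \<Rightarrow> ereal"
  assumes pr: "proper_fn g" and ls: "lsc_fn g" and cv: "convex_fn g" and "0 < \<sigma>"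
    and descent: "\<And>y. 0 < g y \<Longrightarrow> g y < \<infinity> \<Longrightarrow> \<exists>h\<in>sphere 0 1. dirderiv g y h < ereal (- \<sigma>)"
    and gx: "g x = ereal a" "0 < a"
  shows "infdist x (sublevel0 g) \<le> a / \<sigma>"
proof (rule ccontr)
  assume "\<not> ?thesis"
  then obtain \<rho> where \<rho>: "a / \<sigma> < \<rho>" "\<rho> < infdist x (sublevel0 g)"
    using dense not_le by blast
  have "0 < \<rho>" using \<rho>(1) gx(2) \<open>0 < \<sigma>\<close> by (smt (verit) divide_pos_pos)
  then obtain s where s: "a / \<rho> < s" "s < \<sigma>" using \<rho>(1) \<open>0 < \<sigma>\<close> dense by (metis pos_divide_less_eq mult.commute)
  have "0 < s" using s(1) gx(2) \<open>0 < \<rho>\<close> by (smt (verit) divide_pos_pos)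
  have "a < s * \<rho>" using s(1) \<open>0 < \<rho>\<close> by (simp add: field_simps)
  define \<psi> where "\<psi> z = g z + ereal (s * dist z x)" for z
  have "lsc_fn \<psi>" unfolding \<psi>_def by (rule lsc_fn_add_continuous[OF pr ls]) (intro continuous_intros)
  then obtain y where y: "y \<in> cball x \<rho>" and ymin: "\<And>z. z \<in> cball x \<rho> \<Longrightarrow> \<psi> y \<le> \<psi> z"
    using lsc_attains_inf[of \<psi> "cball x \<rho>"] \<open>0 < \<rho>\<close> by auto
  have pos: "0 < g z" if "z \<in> cball x \<rho>" for z
  proof (rule ccontr)
    assume "\<not> 0 < g z"
    then have "infdist x (sublevel0 g) \<le> dist x z" by (intro infdist_le) (simp add: sublevel0_def)
    then show False using that \<rho>(2) by simp
  qed
  have "\<psi> y \<le> ereal a" using ymin[of x] \<open>0 < \<rho>\<close> by (simp add: \<psi>_def gx)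
  then obtain b where gy: "g y = ereal b" and "b + s * dist y x \<le> a"
    using pr unfolding proper_fn_def \<psi>_def by (cases "g y") auto
  moreover have "0 < b" using pos[OF y] gy by simp
  ultimately have "dist y x < \<rho>" using y \<open>a < s * \<rho>\<close> \<open>0 < s\<close>
    by (smt (verit, best) mem_cball mult_left_mono dist_commute)
  obtain h where h: "h \<in> sphere 0 1" "dirderiv g y h < ereal (- \<sigma>)"
    using descent[of y] pos[OF y] gy by auto
  have "ball y (\<rho> - dist y x) \<subseteq> cball x \<rho>"
  proof
    fix z assume "z \<in> ball y (\<rho> - dist y x)"
    then show "z \<in> cball x \<rho>"
      using dist_triangle[of x z y] by (simp add: dist_commute)
  qed
  then have "ereal (- s) \<le> dirderiv g y h"
    using \<open>dist y x < \<rho>\<close> h(1) \<open>0 < s\<close> ymin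
    by (intro dirderiv_ge_at_penalized_min[OF pr cv gy, where r="\<rho> - dist y x" and x=x])
      (auto simp: \<psi>_def)
  then have "ereal (- s) < ereal (- \<sigma>)" using h(2) by (rule le_less_trans)
  then show False using s(2) by simp
qed

lemma tau_min_le_if_descent:
  fixes g :: "'a::euclidean_space \<Rightarrow> ereal"
  assumes "proper_fn g" "lsc_fn g" "convex_fn g" "0 < \<sigma>"
    and "\<And>y. 0 < g y \<Longrightarrow> g y < \<infinity> \<Longrightarrow> \<exists>h\<in>sphere 0 1. dirderiv g y h < ereal (- \<sigma>)"
  shows "tau_min g \<le> ereal (1 / \<sigma>)"
  using assms by (intro tau_min_le) (auto dest: infdist_le_if_descent)

lemma closest_point_in_frontier:
  fixes S :: "'a::euclidean_space set"
  assumes "closed S" "S \<noteq> {}" "y \<notin> S"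
  shows "closest_point S y \<in> frontier S"
proof -
  have "closest_point S y \<notin> interior S"
  proof
    assume int: "closest_point S y \<in> interior S"
    then have "affine hull S = UNIV" by (metis affine_hull_nonempty_interior empty_iff)
    then have "y \<in> rel_interior S"
      using int closest_point_in_rel_interior[OF assms(1,2)] by (simp add: rel_interior_interior)
    then show False using assms(3) rel_interior_subset by blast
  qed
  then show ?thesis
    using closest_point_in_set[OF assms(1,2)] assms(1) by (simp add: frontier_def)
qed

lemma descent_if_tau_min_le:
  fixes g :: "'a::euclidean_space \<Rightarrow> ereal"
  assumes pr: "proper_fn g" and ls: "lsc_fn g" and cv: "convex_fn g"
    and ne: "sublevel0 g \<noteq> {}" and "0 < c" and tm: "tau_min g \<le> ereal c"
    and gy: "g y = ereal a" and "0 < a"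
  shows "\<exists>h\<in>sphere 0 1. dirderiv g y h \<le> ereal (- 1 / (2 * c))"
proof -
  let ?S = "sublevel0 g"
  have cl: "closed ?S" by (rule closed_sublevel0[OF ls])
  define p where "p = closest_point ?S y"
  have pS: "p \<in> ?S" unfolding p_def by (rule closest_point_in_set[OF cl ne])
  obtain b where gp: "g p = ereal b" "b \<le> 0"
    using pS pr unfolding sublevel0_def proper_fn_def by (cases "g p") auto
  have "p \<noteq> y" using pS gy \<open>0 < a\<close> by (auto simp: sublevel0_def)
  then have "0 < dist y p" by simp
  have "tau_min g < ereal (2 * c)" using tm \<open>0 < c\<close> by (simp add: le_less_trans)
  from infdist_le_if_tau_min_less[OF this gy] have "dist y p \<le> 2 * c * a"
    using \<open>0 < a\<close> cl ne by (simp add: p_def infdist_eq_setdist setdist_closest_point)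
  moreover have "b * (2 * c) \<le> 0" using gp(2) \<open>0 < c\<close> by (simp add: mult_nonpos_nonneg)
  ultimately have "(b - a) / dist y p \<le> - 1 / (2 * c)"
    using \<open>0 < dist y p\<close> \<open>0 < c\<close> by (simp add: field_simps)
  then show ?thesis
    using dirderiv_toward_le_secant[OF pr cv gy gp(1) \<open>p \<noteq> y\<close>] by (meson ereal_less_eq(3) order_trans)
qed

lemma dirderiv_less_if_lipschitz_perturbation:
  fixes f g :: "'a::real_normed_vector \<Rightarrow> ereal"
  assumes pr_f: "proper_fn f" and cv_f: "convex_fn f" and pr_g: "proper_fn g" and cv_g: "convex_fn g"
    and fg: "\<And>x. f x = g x + ereal (\<phi> x)" and lip: "L-lipschitz_on UNIV \<phi>"
    and gy: "g y = ereal b" and h: "norm h = 1" and less: "dirderiv f y h < ereal \<sigma>"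
  shows "dirderiv g y h < ereal (\<sigma> + L)"
proof -
  have fy: "f y = ereal (b + \<phi> y)" by (simp add: fg gy)
  obtain t where t: "0 < t" and ft: "f (y + t *\<^sub>R h) < ereal (b + \<phi> y + \<sigma> * t)"
    using eventually_ray_less_if_dirderiv_less[OF pr_f cv_f fy less] zero_less_one
    by (rule eventually_at_right_0E)
  obtain w where gt: "g (y + t *\<^sub>R h) = ereal w"
    using ft pr_g unfolding fg proper_fn_def by (cases "g (y + t *\<^sub>R h)") auto
  have "w + \<phi> (y + t *\<^sub>R h) < b + \<phi> y + \<sigma> * t" using ft by (simp add: fg gt)
  moreover have "\<phi> y - \<phi> (y + t *\<^sub>R h) \<le> L * t"
    using lipschitz_on_normD[OF lip, of y "y + t *\<^sub>R h"] t h by (simp add: abs_le_iff)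
  ultimately have "(w - b) / t < \<sigma> + L" using t by (simp add: field_simps)
  then show ?thesis
    using dirderiv_le_secant[OF pr_g cv_g gy t gt] by (simp add: le_less_trans)
qed

lemma norm_diff_ge_if_inner_le_half:
  fixes h v :: "'a::real_inner"
  assumes h: "norm h = 1" and "0 < t" and inner: "h \<bullet> v \<le> norm v / 2"
  shows "t / 3 \<le> norm (t *\<^sub>R h - v)"
proof -
  have "h \<bullet> (t *\<^sub>R h - v) \<le> norm h * norm (t *\<^sub>R h - v)" by (rule norm_cauchy_schwarz)
  then have "t - h \<bullet> v \<le> norm (t *\<^sub>R h - v)"
    using h by (simp add: inner_diff_right power2_norm_eq_inner[symmetric])
  moreover have "norm v - t \<le> norm (t *\<^sub>R h - v)"
    using norm_triangle_ineq2[of v "t *\<^sub>R h"] h \<open>0 < t\<close> by (simp add: norm_minus_commute)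
  ultimately show ?thesis using inner by linarith
qed

section \<open>The three conditions\<close>

text \<open>Condition (i) is the boundary slope bound together with \<open>qualification_condition f \<tau>\<close>;
  \<open>stable_error_bound\<close> and \<open>tilted_error_bound\<close> are conditions (ii) and (iii) for given \<open>c\<close>, \<open>\<epsilon>\<close>.\<close>

definition qualification_condition :: "('a::real_normed_vector \<Rightarrow> ereal) \<Rightarrow> real \<Rightarrow> bool" where
  "qualification_condition f \<tau> \<longleftrightarrow>
    (\<forall>z xs :: nat \<Rightarrow> 'a.
       (\<forall>k. z k \<in> sublevel0 f - frontier (sublevel0 f)) \<and>
       (\<forall>k. xs k \<in> frontier (sublevel0 f)) \<and>
       ((\<lambda>k. (f (z k) - f (xs k)) / ereal (norm (z k - xs k))) \<longlonglongrightarrow> 0)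
       \<longrightarrow> liminf (\<lambda>k. \<bar>min_dirderiv f (z k)\<bar>) > ereal \<tau>)"

definition stable_error_bound :: "('a::euclidean_space \<Rightarrow> ereal) \<Rightarrow> real \<Rightarrow> real \<Rightarrow> bool" where
  "stable_error_bound f c \<epsilon> \<longleftrightarrow>
    (\<forall>g \<phi>. proper_fn g \<and> lsc_fn g \<and> convex_fn g \<and>
       frontier (sublevel0 f) \<inter> {x. g x = 0} \<noteq> {} \<and>
       (\<forall>x. f x = g x + ereal (\<phi> x)) \<and> Lip \<phi> < ereal \<epsilon>
       \<longrightarrow> tau_min g \<le> ereal c)"

definition tilted_error_bound :: "('a::euclidean_space \<Rightarrow> ereal) \<Rightarrow> real \<Rightarrow> real \<Rightarrow> bool" where
  "tilted_error_bound f c \<epsilon> \<longleftrightarrow>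
    (\<forall>xbar\<in>frontier (sublevel0 f). \<forall>u. norm u \<le> 1 \<longrightarrow>
       tau_min (\<lambda>x. f x + ereal (\<epsilon> * (u \<bullet> (x - xbar)))) \<le> ereal c)"

text \<open>The closest point \<open>p\<close> of \<open>sublevel0 f\<close> to \<open>y\<close> satisfies \<open>\<langle>y - p, x - p\<rangle> \<le> 0\<close> on
  \<open>sublevel0 f\<close>, so the points of the segment from \<open>p + t h\<close> to \<open>y\<close> beyond the hyperplane through \<open>p\<close>
  have positive value; convexity along that segment then gives the bound.\<close>

lemma dist_le_if_descent_at_projection:
  fixes f :: "'a::real_inner \<Rightarrow> ereal"
  assumes cv: "convex_fn f"
    and proj: "\<And>x. x \<in> sublevel0 f \<Longrightarrow> (y - p) \<bullet> (x - p) \<le> 0"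
    and "p \<noteq> y" "0 < \<tau>" and fy: "f y = ereal a"
    and "0 < t" and h: "norm h = 1" and fq: "f (p + t *\<^sub>R h) = ereal w" and w: "w < - \<tau> * t"
  shows "\<tau> * dist y p \<le> a"
proof -
  define r where "r = dist y p"
  have "0 < r" using \<open>p \<noteq> y\<close> by (simp add: r_def)
  have nr: "norm (y - p) = r" by (simp add: r_def dist_norm)
  have "\<tau> * s < a" if s: "0 < s" "s < r" for s
  proof -
    define \<mu> where "\<mu> = t / (t + s)"
    have \<mu>: "\<mu> \<in> {0<..<1}" and one_minus_\<mu>: "1 - \<mu> = s / (t + s)"
      using s \<open>0 < t\<close> by (auto simp: \<mu>_def field_simps)
    define z where "z = (1 - \<mu>) *\<^sub>R (p + t *\<^sub>R h) + \<mu> *\<^sub>R y"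
    have "- r \<le> (y - p) \<bullet> h"
      using Cauchy_Schwarz_ineq2[of "y - p" h] h nr by simp
    have "r * t * (r - s) / (t + s) = (1 - \<mu>) * t * (- r) + \<mu> * r\<^sup>2"
      unfolding one_minus_\<mu> unfolding \<mu>_def
      using s \<open>0 < t\<close> by (simp add: power2_eq_square add_divide_distrib[symmetric] algebra_simps)
    also have "\<dots> \<le> (1 - \<mu>) * t * ((y - p) \<bullet> h) + \<mu> * r\<^sup>2"
      using \<open>- r \<le> (y - p) \<bullet> h\<close> \<mu> \<open>0 < t\<close> by (intro add_right_mono mult_left_mono) auto
    also have "\<dots> = (y - p) \<bullet> (z - p)"
    proof -
      have "z - p = ((1 - \<mu>) * t) *\<^sub>R h + \<mu> *\<^sub>R (y - p)" by (simp add: z_def algebra_simps)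
      then show ?thesis by (simp add: inner_add_right nr[symmetric] power2_norm_eq_inner)
    qed
    finally have "r * t * (r - s) / (t + s) \<le> (y - p) \<bullet> (z - p)" .
    moreover have "0 < r * t * (r - s) / (t + s)" using s \<open>0 < t\<close> by simp
    ultimately have "z \<notin> sublevel0 f" using proj by fastforce
    then have "0 < f z" by (simp add: sublevel0_def)
    also have "f z \<le> ereal ((1 - \<mu>) * w + \<mu> * a)"
      using cv \<mu> unfolding convex_fn_def z_def by (metis fq fy times_ereal.simps(1) plus_ereal.simps(1))
    finally have "0 < (1 - \<mu>) * w + \<mu> * a" by simp
    moreover have "(1 - \<mu>) * w < (1 - \<mu>) * (- \<tau> * t)" using w \<mu> by (intro mult_strict_left_mono) auto
    ultimately have "(1 - \<mu>) * \<tau> * t < \<mu> * a" by (simp add: algebra_simps)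
    then show ?thesis
      unfolding one_minus_\<mu> unfolding \<mu>_def using s \<open>0 < t\<close> by (simp add: divide_less_cancel field_simps)
  qed
  then have "r \<le> a / \<tau>"
    using \<open>0 < \<tau>\<close> by (intro dense_le_bounded[OF \<open>0 < r\<close>]) (simp add: field_simps less_imp_le)
  then show ?thesis using \<open>0 < \<tau>\<close> by (simp add: r_def field_simps)
qed

lemma descent_outside_sublevel:
  fixes f :: "'a::euclidean_space \<Rightarrow> ereal"
  assumes pr: "proper_fn f" and ls: "lsc_fn f" and cv: "convex_fn f"
    and fr: "frontier (sublevel0 f) \<subseteq> {x. f x = 0}" and "0 < \<tau>"
    and slope: "\<And>p. p \<in> frontier (sublevel0 f) \<Longrightarrow> ereal \<tau> < \<bar>min_dirderiv f p\<bar>"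
    and ne: "sublevel0 f \<noteq> {}" and fy: "f y = ereal a" and "0 < a"
  shows "\<exists>h\<in>sphere 0 1. dirderiv f y h \<le> ereal (- \<tau>)"
proof -
  let ?S = "sublevel0 f"
  have cl: "closed ?S" by (rule closed_sublevel0[OF ls])
  define p where "p = closest_point ?S y"
  have yS: "y \<notin> ?S" using fy \<open>0 < a\<close> by (simp add: sublevel0_def)
  have pF: "p \<in> frontier ?S" unfolding p_def by (rule closest_point_in_frontier[OF cl ne yS])
  then have fp: "f p = ereal 0" using fr by auto
  then have "p \<noteq> y" using yS by (auto simp: sublevel0_def)
  have "\<tau> * dist y p \<le> a"
  proof (cases "ereal \<tau> < min_dirderiv f p")
    case True
    from growth_if_min_dirderiv_ge[OF pr cv fp less_imp_le[OF True], of y] fy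
    show ?thesis by (simp add: dist_norm)
  next
    case False
    then have "min_dirderiv f p < ereal (- \<tau>)"
      using slope[OF pF] by (cases "min_dirderiv f p") auto
    then obtain h where h: "h \<in> sphere 0 1" "dirderiv f p h < ereal (- \<tau>)"
      by (auto dest: min_dirderiv_lessD)
    obtain t where "0 < t" and ft: "f (p + t *\<^sub>R h) < ereal (0 + - \<tau> * t)"
      using eventually_ray_less_if_dirderiv_less[OF pr cv fp h(2)] zero_less_one
      by (rule eventually_at_right_0E)
    then obtain w where "f (p + t *\<^sub>R h) = ereal w" "w < - \<tau> * t"
      using pr unfolding proper_fn_def by (cases "f (p + t *\<^sub>R h)") auto
    moreover have "(y - p) \<bullet> (x - p) \<le> 0" if "x \<in> ?S" for x
      using closest_point_dot[OF convex_sublevel0[OF cv] cl that] by (simp add: p_def)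
    ultimately show ?thesis
      using dist_le_if_descent_at_projection[OF cv _ \<open>p \<noteq> y\<close> \<open>0 < \<tau>\<close> fy \<open>0 < t\<close>] h(1) by simp
  qed
  then have "(0 - a) / dist y p \<le> - \<tau>"
    using \<open>p \<noteq> y\<close> by (simp add: field_simps)
  then show ?thesis
    using dirderiv_toward_le_secant[OF pr cv fy fp \<open>p \<noteq> y\<close>] by (meson ereal_less_eq(3) order_trans)
qed

lemma qualification_condition_uniform:
  fixes f :: "'a::real_normed_vector \<Rightarrow> ereal"
  assumes fr: "frontier (sublevel0 f) \<subseteq> {x. f x = 0}" and qc: "qualification_condition f \<tau>"
  obtains e where "0 < e"
    "\<And>y xb a. y \<in> sublevel0 f - frontier (sublevel0 f) \<Longrightarrow> xb \<in> frontier (sublevel0 f) \<Longrightarrow>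
       f y = ereal a \<Longrightarrow> - e * norm (y - xb) < a \<Longrightarrow> ereal \<tau> < \<bar>min_dirderiv f y\<bar>"
proof (rule ccontr)
  let ?S = "sublevel0 f" and ?F = "frontier (sublevel0 f)"
  assume "\<not> thesis"
  then have "\<forall>k::nat. \<exists>y xb a. y \<in> ?S - ?F \<and> xb \<in> ?F \<and> f y = ereal a \<and>
      - (1 / real (Suc k)) * norm (y - xb) < a \<and> \<not> ereal \<tau> < \<bar>min_dirderiv f y\<bar>"
    using that by (metis of_nat_0_less_iff zero_less_Suc divide_pos_pos zero_less_one)
  then obtain z xs A where P: "\<And>k. z k \<in> ?S - ?F" "\<And>k. xs k \<in> ?F" "\<And>k. f (z k) = ereal (A k)"
      "\<And>k. - (1 / real (Suc k)) * norm (z k - xs k) < A k" "\<And>k. \<not> ereal \<tau> < \<bar>min_dirderiv f (z k)\<bar>"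
    by metis
  define n where "n k = norm (z k - xs k)" for k
  have n: "0 < n k" for k using P(1,2)[of k] by (auto simp: n_def)
  have ratio: "(f (z k) - f (xs k)) / ereal (norm (z k - xs k)) = ereal (A k / n k)" for k
    using fr P(2)[of k] n[of k] by (auto simp: P(3) n_def divide_ereal_def divide_inverse)
  have "(\<lambda>k. A k / n k) \<longlonglongrightarrow> 0"
  proof (rule tendsto_sandwich[of "\<lambda>k. - inverse (real (Suc k))" _ _ "\<lambda>k. 0"])
    show "\<forall>\<^sub>F k in sequentially. - inverse (real (Suc k)) \<le> A k / n k"
      using P(4) n by (simp add: n_def field_simps less_imp_le)
    show "\<forall>\<^sub>F k in sequentially. A k / n k \<le> 0"
      using P(1,3) n by (simp add: sublevel0_def divide_nonpos_pos)
    show "(\<lambda>k. - inverse (real (Suc k))) \<longlonglongrightarrow> 0"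
      using tendsto_minus[OF LIMSEQ_inverse_real_of_nat] by simp
  qed simp
  then have "(\<lambda>k. (f (z k) - f (xs k)) / ereal (norm (z k - xs k))) \<longlonglongrightarrow> 0"
    unfolding ratio zero_ereal_def lim_ereal .
  then have "liminf (\<lambda>k. \<bar>min_dirderiv f (z k)\<bar>) > ereal \<tau>"
    using qc P(1,2) unfolding qualification_condition_def by blast
  then have "eventually (\<lambda>k. \<bar>min_dirderiv f (z k)\<bar> > ereal \<tau>) sequentially"
    by (rule less_LiminfD)
  then show False using P(5) by (simp add: eventually_sequentially)
qed

lemma descent_if_above_cone:
  fixes f :: "'a::euclidean_space \<Rightarrow> ereal"
  assumes pr: "proper_fn f" and ls: "lsc_fn f" and cv: "convex_fn f"
    and fr: "frontier (sublevel0 f) \<subseteq> {x. f x = 0}" and "0 < \<tau>" "\<epsilon> \<le> \<tau>"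
    and slope: "\<And>p. p \<in> frontier (sublevel0 f) \<Longrightarrow> ereal \<tau> < \<bar>min_dirderiv f p\<bar>"
    and near: "\<And>y xb a. y \<in> sublevel0 f - frontier (sublevel0 f) \<Longrightarrow> xb \<in> frontier (sublevel0 f) \<Longrightarrow>
       f y = ereal a \<Longrightarrow> - \<epsilon> * norm (y - xb) < a \<Longrightarrow> ereal \<tau> < \<bar>min_dirderiv f y\<bar>"
    and xb: "xb \<in> frontier (sublevel0 f)" and fy: "f y = ereal a" and above: "- \<epsilon> * norm (y - xb) < a"
  shows "\<exists>h\<in>sphere 0 1. dirderiv f y h \<le> ereal (- \<tau>)"
proof (cases "0 < a")
  case True
  have "xb \<in> sublevel0 f" using xb fr by (auto simp: sublevel0_def)
  then show ?thesis
    using descent_outside_sublevel[OF pr ls cv fr \<open>0 < \<tau>\<close> slope _ fy True] by blast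
next
  case False
  then have "y \<in> sublevel0 f" using fy by (simp add: sublevel0_def)
  then have "ereal \<tau> < \<bar>min_dirderiv f y\<bar>"
    using slope near[OF _ xb fy above] by blast
  moreover have "\<not> ereal \<tau> < min_dirderiv f y"
  proof
    assume "ereal \<tau> < min_dirderiv f y"
    from growth_if_min_dirderiv_ge[OF pr cv fy less_imp_le[OF this], of xb]
    have "a + \<tau> * norm (y - xb) \<le> 0" using fr xb by (auto simp: norm_minus_commute)
    moreover have "\<epsilon> * norm (y - xb) \<le> \<tau> * norm (y - xb)"
      using \<open>\<epsilon> \<le> \<tau>\<close> by (simp add: mult_right_mono)
    ultimately show False using above by simp
  qed
  ultimately have "min_dirderiv f y < ereal (- \<tau>)" by (cases "min_dirderiv f y") auto
  then show ?thesis by (auto dest: min_dirderiv_lessD intro: less_imp_le)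
qed

lemma stable_error_bound_if_slope_condition:
  fixes f :: "'a::euclidean_space \<Rightarrow> ereal"
  assumes pr: "proper_fn f" and ls: "lsc_fn f" and cv: "convex_fn f"
    and fr: "frontier (sublevel0 f) \<subseteq> {x. f x = 0}" and "0 < \<tau>"
    and inf: "ereal \<tau> < (INF x\<in>frontier (sublevel0 f). \<bar>min_dirderiv f x\<bar>)"
    and qc: "qualification_condition f \<tau>"
  shows "\<exists>c \<epsilon>. 0 < c \<and> 0 < \<epsilon> \<and> stable_error_bound f c \<epsilon>"
proof -
  let ?F = "frontier (sublevel0 f)"
  obtain e where "0 < e" and near_e: "\<And>y xb a. y \<in> sublevel0 f - ?F \<Longrightarrow> xb \<in> ?F \<Longrightarrow>
       f y = ereal a \<Longrightarrow> - e * norm (y - xb) < a \<Longrightarrow> ereal \<tau> < \<bar>min_dirderiv f y\<bar>"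
    using qualification_condition_uniform[OF fr qc] by blast
  define \<epsilon> where "\<epsilon> = min e (\<tau> / 2)"
  have "0 < \<epsilon>" "\<epsilon> \<le> \<tau> / 2" using \<open>0 < e\<close> \<open>0 < \<tau>\<close> by (auto simp: \<epsilon>_def)
  have slope: "\<And>p. p \<in> ?F \<Longrightarrow> ereal \<tau> < \<bar>min_dirderiv f p\<bar>"
    using inf by (auto intro: less_INF_D)
  have near: "ereal \<tau> < \<bar>min_dirderiv f y\<bar>"
    if "y \<in> sublevel0 f - ?F" "xb \<in> ?F" "f y = ereal a" "- \<epsilon> * norm (y - xb) < a" for y xb a
  proof -
    have "- e * norm (y - xb) \<le> - \<epsilon> * norm (y - xb)" by (simp add: \<epsilon>_def mult_right_mono)
    then show ?thesis using near_e that by simp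
  qed
  have "stable_error_bound f (4 / \<tau>) \<epsilon>"
    unfolding stable_error_bound_def
  proof (intro allI impI, elim conjE)
    fix g \<phi>
    assume pr_g: "proper_fn g" and ls_g: "lsc_fn g" and cv_g: "convex_fn g"
      and "?F \<inter> {x. g x = 0} \<noteq> {}" and fg: "\<forall>x. f x = g x + ereal (\<phi> x)" and "Lip \<phi> < ereal \<epsilon>"
    then obtain xb where xb: "xb \<in> ?F" "g xb = 0" by blast
    have lip: "\<epsilon>-lipschitz_on UNIV \<phi>"
      using \<open>Lip \<phi> < ereal \<epsilon>\<close> \<open>0 < \<epsilon>\<close> by (simp add: Lip_le_iff_lipschitz_on[symmetric])
    have "\<phi> xb = 0" using fg xb fr by force
    have "\<exists>h\<in>sphere 0 1. dirderiv g y h < ereal (- (\<tau> / 4))" if gy_pos: "0 < g y" "g y < \<infinity>" for y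
    proof -
      obtain b where gy: "g y = ereal b" and "0 < b" using gy_pos by (cases "g y") auto
      have fy: "f y = ereal (b + \<phi> y)" using fg gy by simp
      have "\<phi> xb - \<phi> y \<le> \<epsilon> * norm (y - xb)"
        using lipschitz_on_normD[OF lip, of xb y] by (simp add: norm_minus_commute)
      then have above: "- \<epsilon> * norm (y - xb) < b + \<phi> y" using \<open>\<phi> xb = 0\<close> \<open>0 < b\<close> by simp
      have "\<epsilon> \<le> \<tau>" using \<open>\<epsilon> \<le> \<tau> / 2\<close> \<open>0 < \<tau>\<close> by simp
      have "\<exists>h\<in>sphere 0 1. dirderiv f y h \<le> ereal (- \<tau>)"
        by (rule descent_if_above_cone[OF pr ls cv fr \<open>0 < \<tau>\<close> \<open>\<epsilon> \<le> \<tau>\<close> _ _ xb(1) fy above])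
          (use slope near in blast)+
      then obtain h where h: "h \<in> sphere 0 1" "dirderiv f y h \<le> ereal (- \<tau>)" by blast
      then have "dirderiv f y h < ereal (- (3 * \<tau> / 4))"
        using \<open>0 < \<tau>\<close> by (simp add: le_less_trans)
      then have "dirderiv g y h < ereal (- (3 * \<tau> / 4) + \<epsilon>)"
        using h(1) fg by (intro dirderiv_less_if_lipschitz_perturbation[OF pr cv pr_g cv_g _ lip gy]) auto
      moreover have "- (3 * \<tau> / 4) + \<epsilon> \<le> - (\<tau> / 4)" using \<open>\<epsilon> \<le> \<tau> / 2\<close> by simp
      ultimately show ?thesis using h(1) by (meson ereal_less_eq(3) order_less_le_trans)
    qed
    then have "tau_min g \<le> ereal (1 / (\<tau> / 4))"
      using \<open>0 < \<tau>\<close> by (intro tau_min_le_if_descent[OF pr_g ls_g cv_g]) auto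
    then show "tau_min g \<le> ereal (4 / \<tau>)" by simp
  qed
  then show ?thesis using \<open>0 < \<tau>\<close> \<open>0 < \<epsilon>\<close> by (intro exI[of _ "4 / \<tau>"] exI[of _ \<epsilon>]) simp
qed

lemma tilted_error_bound_if_stable:
  fixes f :: "'a::euclidean_space \<Rightarrow> ereal"
  assumes pr: "proper_fn f" and ls: "lsc_fn f" and cv: "convex_fn f"
    and fr: "frontier (sublevel0 f) \<subseteq> {x. f x = 0}" and "0 < \<epsilon>"
    and stable: "stable_error_bound f c \<epsilon>"
  shows "tilted_error_bound f c (\<epsilon> / 2)"
  unfolding tilted_error_bound_def
proof (intro ballI allI impI)
  fix xb u assume xb: "xb \<in> frontier (sublevel0 f)" and u: "norm (u::'a) \<le> 1"
  let ?g = "\<lambda>x. f x + ereal (\<epsilon> / 2 * (u \<bullet> (x - xb)))"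
  define \<phi> where "\<phi> x = - (\<epsilon> / 2) * (u \<bullet> (x - xb))" for x
  have "?g xb = 0" using fr xb by auto
  have fg: "\<forall>x. f x = ?g x + ereal (\<phi> x)"
  proof
    fix x show "f x = ?g x + ereal (\<phi> x)"
      using pr unfolding proper_fn_def by (cases "f x") (simp_all add: \<phi>_def)
  qed
  have "(\<bar>- (\<epsilon> / 2)\<bar> * norm u)-lipschitz_on UNIV \<phi>"
    unfolding \<phi>_def by (rule lipschitz_on_tilt)
  then have "Lip \<phi> \<le> ereal (\<bar>- (\<epsilon> / 2)\<bar> * norm u)"
    by (rule Lip_le_iff_lipschitz_on[THEN iffD2, rotated]) simp
  also have "\<dots> < ereal \<epsilon>"
    using u \<open>0 < \<epsilon>\<close> mult_left_le[of "norm u" "\<epsilon> / 2"] by simp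
  finally show "tau_min ?g \<le> ereal c"
    using stable xb \<open>?g xb = 0\<close> fg proper_fn_tilt[OF pr ls cv] lsc_fn_tilt[OF pr ls cv] convex_fn_tilt[OF pr ls cv]
    unfolding stable_error_bound_def by blast
qed

lemma tilted_sublevel_far_from_ray:
  fixes f :: "'a::real_inner \<Rightarrow> ereal"
  assumes pr: "proper_fn f" and cv: "convex_fn f" and fx0: "f x0 = ereal 0"
    and lo: "ereal (- \<kappa>) \<le> min_dirderiv f x0" and "0 < \<kappa>" and h: "norm h = 1" and "0 < t"
    and z: "f z + ereal (2 * \<kappa> * (h \<bullet> (z - x0))) \<le> 0"
  shows "t / 3 \<le> dist (x0 + t *\<^sub>R h) z"
proof -
  have "ereal (0 + - \<kappa> * norm (z - x0)) \<le> f z" by (rule growth_if_min_dirderiv_ge[OF pr cv fx0 lo])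
  with z have "2 * \<kappa> * (h \<bullet> (z - x0)) \<le> \<kappa> * norm (z - x0)"
    by (cases "f z") auto
  then have "h \<bullet> (z - x0) \<le> norm (z - x0) / 2" using \<open>0 < \<kappa>\<close> by (simp add: field_simps)
  from norm_diff_ge_if_inner_le_half[OF h \<open>0 < t\<close> this] show ?thesis
    by (simp add: dist_norm algebra_simps)
qed

lemma boundary_slope_ge_if_tilted_error_bound:
  fixes f :: "'a::euclidean_space \<Rightarrow> ereal"
  assumes pr: "proper_fn f" and ls: "lsc_fn f" and cv: "convex_fn f"
    and fr: "frontier (sublevel0 f) \<subseteq> {x. f x = 0}" and "0 < c" "0 < \<epsilon>"
    and tilted: "tilted_error_bound f c \<epsilon>"
    and "0 < \<kappa>" "\<kappa> \<le> \<epsilon> / 2" "\<kappa> \<le> 1 / (36 * c)" and xb: "xb \<in> frontier (sublevel0 f)"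
  shows "ereal \<kappa> \<le> \<bar>min_dirderiv f xb\<bar>"
proof (rule ccontr)
  assume "\<not> ?thesis"
  then have lo: "ereal (- \<kappa>) \<le> min_dirderiv f xb" and hi: "min_dirderiv f xb < ereal \<kappa>"
    by (cases "min_dirderiv f xb"; simp)+
  have fxb: "f xb = ereal 0" using fr xb by auto
  obtain h where h: "h \<in> sphere 0 1" "dirderiv f xb h < ereal \<kappa>"
    using min_dirderiv_lessD[OF hi] by blast
  obtain t where "0 < t" and ft: "f (xb + t *\<^sub>R h) < ereal (0 + \<kappa> * t)"
    using eventually_ray_less_if_dirderiv_less[OF pr cv fxb h(2)] zero_less_one
    by (rule eventually_at_right_0E)
  then obtain w where fw: "f (xb + t *\<^sub>R h) = ereal w" "w < \<kappa> * t"
    using pr unfolding proper_fn_def by (cases "f (xb + t *\<^sub>R h)") auto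
  define g where "g x = f x + ereal (\<epsilon> * ((2 * \<kappa> / \<epsilon>) *\<^sub>R h \<bullet> (x - xb)))" for x
  have g_eq: "g x = f x + ereal (2 * \<kappa> * (h \<bullet> (x - xb)))" for x
    using \<open>0 < \<epsilon>\<close> by (simp add: g_def)
  have "norm ((2 * \<kappa> / \<epsilon>) *\<^sub>R h) \<le> 1" using h(1) \<open>0 < \<kappa>\<close> \<open>\<kappa> \<le> \<epsilon> / 2\<close> by simp
  then have "tau_min g \<le> ereal c"
    using tilted xb unfolding tilted_error_bound_def g_def[abs_def] by blast
  then have "tau_min g < ereal (2 * c)" using \<open>0 < c\<close> by (simp add: le_less_trans)
  moreover have "g (xb + t *\<^sub>R h) = ereal (w + 2 * \<kappa> * t)"
    using fw(1) h(1) by (simp add: g_eq power2_norm_eq_inner[symmetric])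
  ultimately have "infdist (xb + t *\<^sub>R h) (sublevel0 g) \<le> 2 * c * max 0 (w + 2 * \<kappa> * t)"
    by (rule infdist_le_if_tau_min_less)
  also have "\<dots> \<le> 2 * c * (3 * \<kappa> * t)"
    using fw(2) \<open>0 < c\<close> \<open>0 < \<kappa>\<close> \<open>0 < t\<close> by (intro mult_left_mono) auto
  also have "\<dots> \<le> t / 6"
    using \<open>\<kappa> \<le> 1 / (36 * c)\<close> \<open>0 < c\<close> \<open>0 < t\<close> by (simp add: field_simps)
  finally have up: "infdist (xb + t *\<^sub>R h) (sublevel0 g) \<le> t / 6" .
  have ne: "sublevel0 g \<noteq> {}" using fxb by (auto simp: sublevel0_def g_eq intro!: exI[of _ xb])
  have "t / 3 \<le> dist (xb + t *\<^sub>R h) z" if "z \<in> sublevel0 g" for z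
    using that h(1) \<open>0 < \<kappa>\<close> \<open>0 < t\<close>
    by (intro tilted_sublevel_far_from_ray[OF pr cv fxb lo]) (auto simp: sublevel0_def g_eq)
  then have "t / 3 \<le> infdist (xb + t *\<^sub>R h) (sublevel0 g)"
    unfolding infdist_notempty[OF ne] by (intro cINF_greatest[OF ne])
  with up \<open>0 < t\<close> show False by simp
qed

lemma min_dirderiv_less_if_tilted_error_bound:
  fixes f :: "'a::euclidean_space \<Rightarrow> ereal"
  assumes pr: "proper_fn f" and ls: "lsc_fn f" and cv: "convex_fn f"
    and fr: "frontier (sublevel0 f) \<subseteq> {x. f x = 0}" and "0 < c" "0 < \<epsilon>"
    and tilted: "tilted_error_bound f c \<epsilon>"
    and "0 < \<alpha>" "\<alpha> \<le> \<epsilon>" "\<alpha> \<le> 1 / (8 * c)"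
    and xb: "xb \<in> frontier (sublevel0 f)" and fy: "f y = ereal a" and "y \<noteq> xb"
    and above: "- \<alpha> * norm (y - xb) < a"
  shows "min_dirderiv f y < ereal (- 1 / (4 * c))"
proof -
  define n where "n = norm (y - xb)"
  define e where "e = (1 / n) *\<^sub>R (y - xb)"
  have "0 < n" "norm e = 1" "e \<bullet> (y - xb) = n"
    using \<open>y \<noteq> xb\<close> by (auto simp: n_def e_def power2_norm_eq_inner[symmetric] power2_eq_square)
  define g where "g x = f x + ereal (\<epsilon> * ((\<alpha> / \<epsilon>) *\<^sub>R e \<bullet> (x - xb)))" for x
  have g_eq: "g x = f x + ereal (\<alpha> * (e \<bullet> (x - xb)))" for x
    using \<open>0 < \<epsilon>\<close> by (simp add: g_def)
  have pr_g: "proper_fn g" and ls_g: "lsc_fn g" and cv_g: "convex_fn g"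
    unfolding g_def[abs_def] using proper_fn_tilt lsc_fn_tilt convex_fn_tilt pr ls cv by blast+
  have "norm ((\<alpha> / \<epsilon>) *\<^sub>R e) \<le> 1" using \<open>norm e = 1\<close> \<open>0 < \<alpha>\<close> \<open>\<alpha> \<le> \<epsilon>\<close> by simp
  then have "tau_min g \<le> ereal c"
    using tilted xb unfolding tilted_error_bound_def g_def[abs_def] by blast
  moreover have "sublevel0 g \<noteq> {}"
    using fr xb by (auto simp: sublevel0_def g_eq intro!: exI[of _ xb])
  moreover have gy: "g y = ereal (a + \<alpha> * n)" using fy \<open>e \<bullet> (y - xb) = n\<close> by (simp add: g_eq)
  moreover have "0 < a + \<alpha> * n" using above by (simp add: n_def)
  ultimately obtain h where h: "h \<in> sphere 0 1" "dirderiv g y h \<le> ereal (- 1 / (2 * c))"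
    using descent_if_tau_min_le[OF pr_g ls_g cv_g _ \<open>0 < c\<close>] by blast
  have "ereal (- 1 / (2 * c)) < ereal (- 3 / (8 * c))" using \<open>0 < c\<close> by (simp add: field_simps)
  with h(2) have "dirderiv g y h < ereal (- 3 / (8 * c))" by (rule le_less_trans)
  moreover have "(\<bar>\<alpha>\<bar> * norm e)-lipschitz_on UNIV (\<lambda>x. \<alpha> * (e \<bullet> (x - xb)))"
    by (rule lipschitz_on_tilt)
  ultimately have "dirderiv f y h < ereal (- 3 / (8 * c) + \<bar>\<alpha>\<bar> * norm e)"
    using h(1) by (intro dirderiv_less_if_lipschitz_perturbation[OF pr_g cv_g pr cv g_eq _ fy]) auto
  also have "\<dots> \<le> ereal (- 1 / (4 * c))"
    using \<open>norm e = 1\<close> \<open>0 < \<alpha>\<close> \<open>\<alpha> \<le> 1 / (8 * c)\<close> \<open>0 < c\<close> by (simp add: field_simps)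
  finally show ?thesis using min_dirderiv_le[OF h(1)] by (rule le_less_trans[rotated])
qed

lemma slope_condition_if_tilted_error_bound:
  fixes f :: "'a::euclidean_space \<Rightarrow> ereal"
  assumes pr: "proper_fn f" and ls: "lsc_fn f" and cv: "convex_fn f"
    and fr: "frontier (sublevel0 f) \<subseteq> {x. f x = 0}" and "0 < c" "0 < \<epsilon>"
    and tilted: "tilted_error_bound f c \<epsilon>"
  shows "\<exists>\<tau>. 0 < \<tau> \<and> ereal \<tau> < (INF x\<in>frontier (sublevel0 f). \<bar>min_dirderiv f x\<bar>) \<and>
    qualification_condition f \<tau>"
proof -
  let ?S = "sublevel0 f" and ?F = "frontier (sublevel0 f)"
  define \<kappa> where "\<kappa> = min (\<epsilon> / 2) (1 / (36 * c))"
  define \<alpha> where "\<alpha> = min \<epsilon> (1 / (8 * c))"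
  have \<kappa>: "0 < \<kappa>" "\<kappa> \<le> \<epsilon> / 2" "\<kappa> \<le> 1 / (36 * c)" and \<alpha>: "0 < \<alpha>" "\<alpha> \<le> \<epsilon>" "\<alpha> \<le> 1 / (8 * c)"
    using \<open>0 < c\<close> \<open>0 < \<epsilon>\<close> by (auto simp: \<kappa>_def \<alpha>_def)
  have "ereal (\<kappa> / 2) < ereal \<kappa>" using \<kappa>(1) by simp
  also have "\<dots> \<le> (INF x\<in>?F. \<bar>min_dirderiv f x\<bar>)"
    using boundary_slope_ge_if_tilted_error_bound[OF pr ls cv fr \<open>0 < c\<close> \<open>0 < \<epsilon>\<close> tilted \<kappa>]
    by (rule INF_greatest)
  finally have inf: "ereal (\<kappa> / 2) < (INF x\<in>?F. \<bar>min_dirderiv f x\<bar>)" .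
  have "qualification_condition f (\<kappa> / 2)"
    unfolding qualification_condition_def
  proof (intro allI impI, elim conjE)
    fix z xs :: "nat \<Rightarrow> 'a"
    assume z: "\<forall>k. z k \<in> ?S - ?F" and xs: "\<forall>k. xs k \<in> ?F"
      and lim: "(\<lambda>k. (f (z k) - f (xs k)) / ereal (norm (z k - xs k))) \<longlonglongrightarrow> 0"
    have "eventually (\<lambda>k. ereal (- \<alpha>) < (f (z k) - f (xs k)) / ereal (norm (z k - xs k))) sequentially"
      using lim \<alpha>(1) by (intro order_tendstoD(1)) auto
    then have slope_bound: "eventually (\<lambda>k. ereal (1 / (4 * c)) \<le> \<bar>min_dirderiv f (z k)\<bar>) sequentially"
    proof eventually_elim
      case (elim k)
      have "f (z k) \<le> 0" using z by (simp add: sublevel0_def)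
      then obtain a where fz: "f (z k) = ereal a"
        using pr unfolding proper_fn_def by (cases "f (z k)") auto
      have "z k \<noteq> xs k" using z xs by (metis Diff_iff)
      then have "0 < norm (z k - xs k)" by simp
      moreover have "f (xs k) = 0" using fr xs by auto
      ultimately have "- \<alpha> * norm (z k - xs k) < a"
        using elim by (simp add: fz divide_ereal_def field_simps)
      with min_dirderiv_less_if_tilted_error_bound[OF pr ls cv fr \<open>0 < c\<close> \<open>0 < \<epsilon>\<close> tilted \<alpha>]
      have "min_dirderiv f (z k) < ereal (- 1 / (4 * c))"
        using xs fz \<open>z k \<noteq> xs k\<close> by blast
      then show ?case by (cases "min_dirderiv f (z k)") auto
    qed
    have "ereal (\<kappa> / 2) < ereal (1 / (4 * c))"
      using \<kappa>(3) \<open>0 < c\<close> by (simp add: field_simps)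
    also have "\<dots> \<le> liminf (\<lambda>k. \<bar>min_dirderiv f (z k)\<bar>)"
      using slope_bound by (rule Liminf_bounded)
    finally show "liminf (\<lambda>k. \<bar>min_dirderiv f (z k)\<bar>) > ereal (\<kappa> / 2)" .
  qed
  then show ?thesis using inf \<kappa>(1) by (intro exI[of _ "\<kappa> / 2"]) simp
qed

theorem theorem9:
  fixes f :: "'a::euclidean_space \<Rightarrow> ereal"
  assumes "proper_fn f" and "lsc_fn f" and "convex_fn f"
    and "frontier (sublevel0 f) \<subseteq> {x. f x = 0}"
  shows
   "((\<exists>\<tau>::real. 0 < \<tau> \<and>
        (INF x\<in>frontier (sublevel0 f). \<bar>min_dirderiv f x\<bar>) > ereal \<tau> \<and>
        (\<forall>z xs :: nat \<Rightarrow> 'a.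
           (\<forall>k. z k \<in> sublevel0 f - frontier (sublevel0 f)) \<and>
           (\<forall>k. xs k \<in> frontier (sublevel0 f)) \<and>
           ((\<lambda>k. (f (z k) - f (xs k)) / ereal (norm (z k - xs k))) \<longlonglongrightarrow> 0)
           \<longrightarrow> liminf (\<lambda>k. \<bar>min_dirderiv f (z k)\<bar>) > ereal \<tau>))
     \<longleftrightarrow>
     (\<exists>c \<epsilon>::real. 0 < c \<and> 0 < \<epsilon> \<and>
        (\<forall>g \<phi>. proper_fn g \<and> lsc_fn g \<and> convex_fn g \<and>
           frontier (sublevel0 f) \<inter> {x. g x = 0} \<noteq> {} \<and>
           (\<forall>x. f x = g x + ereal (\<phi> x)) \<and> Lip \<phi> < ereal \<epsilon>
           \<longrightarrow> tau_min g \<le> ereal c)))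
    \<and>
    ((\<exists>c \<epsilon>::real. 0 < c \<and> 0 < \<epsilon> \<and>
        (\<forall>g \<phi>. proper_fn g \<and> lsc_fn g \<and> convex_fn g \<and>
           frontier (sublevel0 f) \<inter> {x. g x = 0} \<noteq> {} \<and>
           (\<forall>x. f x = g x + ereal (\<phi> x)) \<and> Lip \<phi> < ereal \<epsilon>
           \<longrightarrow> tau_min g \<le> ereal c))
     \<longleftrightarrow>
     (\<exists>c \<epsilon>::real. 0 < c \<and> 0 < \<epsilon> \<and>
        (\<forall>xbar\<in>frontier (sublevel0 f). \<forall>u::'a. norm u \<le> 1 \<longrightarrow>
           tau_min (\<lambda>x. f x + ereal (\<epsilon> * (u \<bullet> (x - xbar)))) \<le> ereal c)))"
proof -
  let ?slope = "\<exists>\<tau>. 0 < \<tau> \<and> ereal \<tau> < (INF x\<in>frontier (sublevel0 f). \<bar>min_dirderiv f x\<bar>) \<and>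
    qualification_condition f \<tau>"
  let ?stable = "\<exists>c \<epsilon>. 0 < c \<and> 0 < \<epsilon> \<and> stable_error_bound f c \<epsilon>"
  let ?tilted = "\<exists>c \<epsilon>. 0 < c \<and> 0 < \<epsilon> \<and> tilted_error_bound f c \<epsilon>"
  have "?slope \<Longrightarrow> ?stable" using stable_error_bound_if_slope_condition[OF assms] by blast
  moreover have "?stable \<Longrightarrow> ?tilted" using tilted_error_bound_if_stable[OF assms] half_gt_zero by blast
  moreover have "?tilted \<Longrightarrow> ?slope" using slope_condition_if_tilted_error_bound[OF assms] by blast
  ultimately show ?thesis
    unfolding qualification_condition_def[symmetric] stable_error_bound_def[symmetric]
      tilted_error_bound_def[symmetric]
    by blast
qed

end
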